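(* Under the setting below, let $(x^*,z^*,s^* )$ with multiplier $\lambda^*$ for (C) (and nonnegative multipliers for the other constraints) be a KKT point of (P). Then for every $t$ with $(\beta_t,\theta_t)\in\Omega^{II}_t(\lambda^* )$ we have $(x_t^*,z_t^* )=(1,z^{II}_t(\lambda^* ))$, where $z^{II}_t(\lambda)=1-a_t(\beta_t,\lambda)$ and $\Omega^{II}_t(\lambda)=\Big\{(\beta,\theta):\beta>0,\ \theta>\frac{X_t(\lambda)}{u_t'(1)},\ \beta\ge\frac{p_tc_t+r_t\lambda}{c_te_t'(c_t)}\Big\}$.
   Context: Fix an integer $T\ge 1$, a data cap $Q>0$ and an overage fee $\pi>0$. For each $t\in\{1,\dots,T\}$ fix reals $d_t\ge 0$, $r_t\ge 0$, $c_t>0$, $p_t>0$, $\theta_t>0$, $\beta_t>0$ and functions $u_t,e_t:[0,\infty)\to\mathbb{R}$ such that: $u_t$ is continuous, increasing and strictly concave, differentiable on $(0,\infty)$, and $u_t':(0,\infty)\to(0,\infty)$ is a strictly decreasing bijection with inverse $u_t'^{-1}$; $e_t$ is increasing, strictly convex and continuously differentiable, and $e_t':[0,\infty)\to[0,\infty)$ is a strictly increasing bijection with inverse $e_t'^{-1}$. For $0\le z\le x\le 1$ let $\tilde f_t(x,z)=\theta_t u_t(x)-\beta_t e_t((x-z)c_t)-p_t c_t z$ and $\tilde h_t(x,z)=d_t x+r_t z$. Problem (P): maximize $\sum_{t=1}^T \tilde f_t(x_t,z_t)-\pi s$ over $x,z\in\mathbb{R}^T$, $s\in\mathbb{R}$,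 subject to $0\le z_t\le x_t\le 1$ for all $t$, $s\ge 0$, and (C): $s\ge \sum_{t=1}^T\tilde h_t(x_t,z_t)-Q$. A KKT point of (P) consists of a feasible $(x^*,z^*,s^* )$ and nonnegative Lagrange multipliers for all constraints satisfying stationarity of the Lagrangian and complementary slackness; $\lambda^*$ denotes the multiplier of (C) (the shadow price of wireless data). For $\lambda\ge 0$ and $\beta>0$ write $a_t(\beta,\lambda)=\frac{1}{c_t}\,e_t'^{-1}\!\Big(\frac{p_tc_t+r_t\lambda}{\beta c_t}\Big)$ and $X_t(\lambda)=p_tc_t+(d_t+r_t)\lambda$. *)

theory Defs
  imports "HOL-Analysis.Analysis"
begin

definition strictly_convex_on :: "real set \<Rightarrow> (real \<Rightarrow> real) \<Rightarrow> bool" where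
  "strictly_convex_on S f \<longleftrightarrow>
     (\<forall>x\<in>S. \<forall>y\<in>S. x \<noteq> y \<longrightarrow> (\<forall>w::real. 0 < w \<and> w < 1 \<longrightarrow>
        f ((1 - w) * x + w * y) < (1 - w) * f x + w * f y))"

definition strictly_concave_on :: "real set \<Rightarrow> (real \<Rightarrow> real) \<Rightarrow> bool" where
  "strictly_concave_on S f \<longleftrightarrow> strictly_convex_on S (\<lambda>x. - f x)"

definition period_data ::
  "(real \<Rightarrow> real) \<Rightarrow> (real \<Rightarrow> real) \<Rightarrow> (real \<Rightarrow> real) \<Rightarrow> (real \<Rightarrow> real) \<Rightarrow>
   real \<Rightarrow> real \<Rightarrow> real \<Rightarrow> real \<Rightarrow> real \<Rightarrow> real \<Rightarrow> bool" where
  "period_data u up e ep d r c p \<theta> \<beta> \<longleftrightarrow>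
     d \<ge> 0 \<and> r \<ge> 0 \<and> c > 0 \<and> p > 0 \<and> \<theta> > 0 \<and> \<beta> > 0 \<and>
     continuous_on {0..} u \<and> mono_on {0..} u \<and> strictly_concave_on {0..} u \<and>
     (\<forall>y>0. (u has_real_derivative up y) (at y)) \<and>
     (\<forall>y>0. \<forall>y'>y. up y' < up y) \<and> bij_betw up {0<..} {0<..} \<and>
     mono_on {0..} e \<and> strictly_convex_on {0..} e \<and>
     (\<forall>y\<ge>0. (e has_real_derivative ep y) (at y within {0..})) \<and>
     continuous_on {0..} ep \<and>
     strict_mono_on {0..} ep \<and> bij_betw ep {0..} {0..}"

definition a_fun :: "(real \<Rightarrow> real) \<Rightarrow> real \<Rightarrow> real \<Rightarrow> real \<Rightarrow> real \<Rightarrow> real \<Rightarrow> real" where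
  "a_fun ep c p r \<beta> lam = (1 / c) * the_inv_into {0..} ep ((p * c + r * lam) / (\<beta> * c))"

definition X_fun :: "real \<Rightarrow> real \<Rightarrow> real \<Rightarrow> real \<Rightarrow> real \<Rightarrow> real" where
  "X_fun c p d r lam = p * c + (d + r) * lam"

definition z_II :: "(real \<Rightarrow> real) \<Rightarrow> real \<Rightarrow> real \<Rightarrow> real \<Rightarrow> real \<Rightarrow> real \<Rightarrow> real" where
  "z_II ep c p r \<beta> lam = 1 - a_fun ep c p r \<beta> lam"

definition Omega_II ::
  "(real \<Rightarrow> real) \<Rightarrow> (real \<Rightarrow> real) \<Rightarrow> real \<Rightarrow> real \<Rightarrow> real \<Rightarrow> real \<Rightarrow> real \<Rightarrow> (real \<times> real) set" where
  "Omega_II up ep c p d r lam =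
     {(\<beta>, \<theta>). \<beta> > 0 \<and> \<theta> > X_fun c p d r lam / up 1 \<and> \<beta> \<ge> (p * c + r * lam) / (c * ep c)}"

text \<open>KKT point of problem (P), with the Lagrangian
  L = sum_t f_t - pi s + sum_t mu1_t z_t + sum_t mu2_t (x_t - z_t) + sum_t mu3_t (1 - x_t)
      + nu s + lambda (s - sum_t h_t + Q).
  Stationarity requires the (one-sided, relative to the domain [0,inf)) derivative of u_t
  at x_t to exist.\<close>
definition KKT_point ::
  "nat \<Rightarrow> real \<Rightarrow> real \<Rightarrow> (nat \<Rightarrow> real \<Rightarrow> real) \<Rightarrow> (nat \<Rightarrow> real \<Rightarrow> real) \<Rightarrow>
   (nat \<Rightarrow> real) \<Rightarrow> (nat \<Rightarrow> real) \<Rightarrow> (nat \<Rightarrow> real) \<Rightarrow> (nat \<Rightarrow> real) \<Rightarrow>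
   (nat \<Rightarrow> real) \<Rightarrow> (nat \<Rightarrow> real) \<Rightarrow>
   (nat \<Rightarrow> real) \<Rightarrow> (nat \<Rightarrow> real) \<Rightarrow> real \<Rightarrow>
   (nat \<Rightarrow> real) \<Rightarrow> (nat \<Rightarrow> real) \<Rightarrow> (nat \<Rightarrow> real) \<Rightarrow> real \<Rightarrow> real \<Rightarrow> bool" where
  "KKT_point T Q \<pi> u ep d r c p \<theta> \<beta> x z s \<mu>1 \<mu>2 \<mu>3 \<nu> lam \<longleftrightarrow>
     \<comment> \<open>feasibility\<close>
     (\<forall>t\<in>{1..T}. 0 \<le> z t \<and> z t \<le> x t \<and> x t \<le> 1) \<and> s \<ge> 0 \<and>
     s \<ge> (\<Sum>t=1..T. d t * x t + r t * z t) - Q \<and>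
     \<comment> \<open>nonnegative multipliers\<close>
     (\<forall>t\<in>{1..T}. \<mu>1 t \<ge> 0 \<and> \<mu>2 t \<ge> 0 \<and> \<mu>3 t \<ge> 0) \<and> \<nu> \<ge> 0 \<and> lam \<ge> 0 \<and>
     \<comment> \<open>stationarity\<close>
     (\<forall>t\<in>{1..T}. \<exists>Du. (u t has_real_derivative Du) (at (x t) within {0..}) \<and>
        \<theta> t * Du - \<beta> t * ep t ((x t - z t) * c t) * c t + \<mu>2 t - \<mu>3 t - lam * d t = 0 \<and>
        \<beta> t * ep t ((x t - z t) * c t) * c t - p t * c t + \<mu>1 t - \<mu>2 t - lam * r t = 0) \<and>
     - \<pi> + \<nu> + lam = 0 \<and>
     \<comment> \<open>complementary slackness\<close>
     (\<forall>t\<in>{1..T}. \<mu>1 t * z t = 0 \<and> \<mu>2 t * (x t - z t) = 0 \<and> \<mu>3 t * (1 - x t) = 0) \<and>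
     \<nu> * s = 0 \<and> lam * (s - ((\<Sum>t=1..T. d t * x t + r t * z t) - Q)) = 0"

end

theory Submission
  imports Defs
begin

text \<open>If x_t < 1, the multiplier of x_t \<le> 1 vanishes and stationarity gives
  theta_t u_t'(x_t) \<le> X_t(lambda) < theta_t u_t'(1), contradicting u_t'(x_t) > u_t'(1), which holds by
  strict concavity. With x_t = 1, z_t = 1 would make the stationarity in z_t negative, so the
  multiplier of z_t \<le> x_t vanishes; the lower bound on beta_t in Omega^II rules out a positive
  multiplier at z_t = 0. Hence e_t'((1 - z_t) c_t) = (p_t c_t + r_t lambda)/(beta_t c_t), and
  inverting e_t' gives z_t = z^II_t(lambda).\<close>

lemma strictly_concave_deriv_ge_chord:
  fixes u :: "real \<Rightarrow> real"
  assumes conc: "strictly_concave_on {0..} u"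
    and "0 \<le> x" and "x < b"
    and D: "(u has_real_derivative D) (at x within {0..})"
  shows "D \<ge> (u b - u x) / (b - x)"
proof -
  let ?q = "\<lambda>y. (u y - u x) / (y - x)"
  have "(?q \<longlongrightarrow> D) (at x within {0..})"
    using D by (simp add: has_field_derivative_iff)
  hence lim: "(?q \<longlongrightarrow> D) (at_right x)"
    by (rule tendsto_within_subset) (use \<open>0 \<le> x\<close> in auto)
  have "eventually (\<lambda>y. x < y \<and> y < b) (at_right x)"
    using eventually_at_right_real[OF \<open>x < b\<close>] by (simp add: eventually_at_filter)
  hence "eventually (\<lambda>y. ?q y \<ge> (u b - u x) / (b - x)) (at_right x)"
  proof eventually_elim
    case (elim y)
    define w where "w = (y - x) / (b - x)"
    have "0 < w" "w < 1" using elim by (auto simp: w_def field_simps)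
    moreover have "w * (b - x) = y - x" using \<open>x < b\<close> by (simp add: w_def)
    hence "(1 - w) * x + w * b = y" by (simp add: algebra_simps)
    ultimately have "u y - u x > w * (u b - u x)"
      using conc[unfolded strictly_concave_on_def strictly_convex_on_def, rule_format, of x b w]
        \<open>0 \<le> x\<close> \<open>x < b\<close> by (simp add: algebra_simps)
    thus ?case using elim by (simp add: w_def field_simps)
  qed
  thus ?thesis by (rule tendsto_lowerbound[OF lim]) simp
qed

lemma strictly_concave_deriv_gt_deriv_right:
  fixes u u' :: "real \<Rightarrow> real"
  assumes conc: "strictly_concave_on {0..} u" and cont: "continuous_on {0..} u"
    and deriv: "\<forall>y>0. (u has_real_derivative u' y) (at y)"
    and decr: "\<forall>y>0. \<forall>y'>y. u' y' < u' y"
    and "0 \<le> x" and "x < b"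
    and D: "(u has_real_derivative D) (at x within {0..})"
  shows "D > u' b"
proof -
  have "continuous_on {x..b} u"
    by (rule continuous_on_subset[OF cont]) (use \<open>0 \<le> x\<close> in auto)
  moreover have "\<And>y. x < y \<Longrightarrow> y < b \<Longrightarrow> u differentiable (at y)"
    using deriv \<open>0 \<le> x\<close> by (meson le_less_trans real_differentiable_def)
  ultimately obtain l \<xi> where \<xi>: "x < \<xi>" "\<xi> < b" "DERIV u \<xi> :> l" "u b - u x = (b - x) * l"
    using MVT[OF \<open>x < b\<close>] by metis
  have "\<xi> > 0" using \<xi>(1) \<open>0 \<le> x\<close> by linarith
  hence "l = u' \<xi>" using deriv \<xi>(3) DERIV_unique by blast
  hence "l > u' b" using decr \<open>\<xi> > 0\<close> \<xi>(2) by blast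
  moreover have "D \<ge> l"
    using strictly_concave_deriv_ge_chord[OF conc \<open>0 \<le> x\<close> \<open>x < b\<close> D] \<xi>(4) \<open>x < b\<close> by simp
  ultimately show ?thesis by linarith
qed

lemma strict_mono_on_bij_betw_nonneg_zero:
  fixes f :: "real \<Rightarrow> real"
  assumes mono: "strict_mono_on {0..} f" and bij: "bij_betw f {0..} {0..}"
  shows "f 0 = 0"
proof -
  obtain y where "y \<ge> 0" "f y = 0"
    using bij unfolding bij_betw_def by (metis atLeast_iff imageE order_refl)
  moreover have "f 0 \<ge> 0" using bij unfolding bij_betw_def by auto
  moreover have "f 0 < f y" if "y > 0"
    using mono[unfolded strict_mono_on_def, rule_format, of 0 y] that by simp
  ultimately show ?thesis by force
qed

lemma kkt_period_full_usage:
  fixes u u' :: "real \<Rightarrow> real"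
  assumes conc: "strictly_concave_on {0..} u" and cont: "continuous_on {0..} u"
    and deriv: "\<forall>y>0. (u has_real_derivative u' y) (at y)"
    and decr: "\<forall>y>0. \<forall>y'>y. u' y' < u' y"
    and "0 \<le> x" "x \<le> 1"
    and Du: "(u has_real_derivative Du) (at x within {0..})"
    and "\<theta> > 0" and value_gt_cost: "\<theta> * u' 1 > p * c + (d + r) * lam"
    and stat_x: "\<theta> * Du - E + \<mu>2 - \<mu>3 - lam * d = 0"
    and stat_z: "E - p * c + \<mu>1 - \<mu>2 - lam * r = 0"
    and "\<mu>1 \<ge> 0" and "\<mu>3 * (1 - x) = 0"
  shows "x = 1"
proof (rule ccontr)
  assume "x \<noteq> 1"
  hence "x < 1" using \<open>x \<le> 1\<close> by simp
  hence "\<mu>3 = 0" using \<open>\<mu>3 * (1 - x) = 0\<close> by simp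
  have "Du > u' 1"
    by (rule strictly_concave_deriv_gt_deriv_right[OF conc cont deriv decr \<open>0 \<le> x\<close> \<open>x < 1\<close> Du])
  hence "\<theta> * Du > p * c + (d + r) * lam"
    using \<open>\<theta> > 0\<close> value_gt_cost mult_strict_left_mono[of "u' 1" Du \<theta>] by linarith
  thus False using stat_x stat_z \<open>\<mu>3 = 0\<close> \<open>\<mu>1 \<ge> 0\<close> by (simp add: algebra_simps)
qed

lemma kkt_period_marginal_cost:
  fixes ep :: "real \<Rightarrow> real"
  assumes mono: "strict_mono_on {0..} ep" and "ep 0 = 0"
    and "c > 0" "\<beta> > 0" "p > 0" "r \<ge> 0" "lam \<ge> 0"
    and "0 \<le> z" "z \<le> 1"
    and \<beta>_ge: "\<beta> \<ge> (p * c + r * lam) / (c * ep c)"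
    and stat_z: "\<beta> * ep ((1 - z) * c) * c - p * c + \<mu>1 - \<mu>2 - lam * r = 0"
    and "\<mu>1 \<ge> 0" "\<mu>2 \<ge> 0" "\<mu>1 * z = 0" "\<mu>2 * (1 - z) = 0"
  shows "ep ((1 - z) * c) = (p * c + r * lam) / (\<beta> * c)"
proof -
  have "z \<noteq> 1"
  proof
    assume "z = 1"
    hence "\<mu>1 = 0" using \<open>\<mu>1 * z = 0\<close> by simp
    moreover have "p * c > 0" "lam * r \<ge> 0" using assms(3-7) by simp_all
    ultimately show False using stat_z \<open>z = 1\<close> \<open>ep 0 = 0\<close> \<open>\<mu>2 \<ge> 0\<close> by simp
  qed
  hence "\<mu>2 = 0" using \<open>\<mu>2 * (1 - z) = 0\<close> by simp
  have "\<mu>1 = 0"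
  proof (cases "z = 0")
    case True
    have "ep c > 0"
      using mono[unfolded strict_mono_on_def, rule_format, of 0 c] \<open>ep 0 = 0\<close> \<open>c > 0\<close> by simp
    hence "\<beta> * c * ep c \<ge> p * c + r * lam"
      using \<beta>_ge \<open>c > 0\<close> by (simp add: pos_divide_le_eq mult.commute mult.left_commute)
    thus ?thesis using stat_z True \<open>\<mu>2 = 0\<close> \<open>\<mu>1 \<ge> 0\<close> by (simp add: algebra_simps)
  next
    case False
    thus ?thesis using \<open>\<mu>1 * z = 0\<close> by simp
  qed
  thus ?thesis using stat_z \<open>\<mu>2 = 0\<close> \<open>\<beta> > 0\<close> \<open>c > 0\<close> by (simp add: field_simps)
qed

theorem lemma2:
  fixes T :: nat and Q \<pi> :: real
    and u up e ep :: "nat \<Rightarrow> real \<Rightarrow> real"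
    and d r c p \<theta> \<beta> :: "nat \<Rightarrow> real"
    and x z \<mu>1 \<mu>2 \<mu>3 :: "nat \<Rightarrow> real" and s \<nu> lam :: real
  assumes "T \<ge> 1" and "Q > 0" and "\<pi> > 0"
    and "\<forall>t\<in>{1..T}. period_data (u t) (up t) (e t) (ep t) (d t) (r t) (c t) (p t) (\<theta> t) (\<beta> t)"
    and "KKT_point T Q \<pi> u ep d r c p \<theta> \<beta> x z s \<mu>1 \<mu>2 \<mu>3 \<nu> lam"
    and "t \<in> {1..T}"
    and "(\<beta> t, \<theta> t) \<in> Omega_II (up t) (ep t) (c t) (p t) (d t) (r t) lam"
  shows "x t = 1 \<and> z t = z_II (ep t) (c t) (p t) (r t) (\<beta> t) lam"
proof -
  have pd: "period_data (u t) (up t) (e t) (ep t) (d t) (r t) (c t) (p t) (\<theta> t) (\<beta> t)"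
    using assms(4,6) by blast
  have kkt: "0 \<le> z t" "z t \<le> x t" "x t \<le> 1" "\<mu>1 t \<ge> 0" "\<mu>2 t \<ge> 0" "lam \<ge> 0"
    "\<mu>1 t * z t = 0" "\<mu>2 t * (x t - z t) = 0" "\<mu>3 t * (1 - x t) = 0"
    using assms(5,6) unfolding KKT_point_def by auto
  obtain Du where Du: "(u t has_real_derivative Du) (at (x t) within {0..})"
    and stat_x: "\<theta> t * Du - \<beta> t * ep t ((x t - z t) * c t) * c t + \<mu>2 t - \<mu>3 t - lam * d t = 0"
    and stat_z: "\<beta> t * ep t ((x t - z t) * c t) * c t - p t * c t + \<mu>1 t - \<mu>2 t - lam * r t = 0"
    using assms(5,6) unfolding KKT_point_def by blast
  have pd_facts: "c t > 0" "\<beta> t > 0" "p t > 0" "r t \<ge> 0" "\<theta> t > 0"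
    "strictly_concave_on {0..} (u t)" "continuous_on {0..} (u t)"
    "\<forall>y>0. (u t has_real_derivative up t y) (at y)" "\<forall>y>0. \<forall>y'>y. up t y' < up t y"
    "up t 1 > 0" "strict_mono_on {0..} (ep t)" "bij_betw (ep t) {0..} {0..}"
    using pd unfolding period_data_def bij_betw_def by auto
  have \<beta>_ge: "\<beta> t \<ge> (p t * c t + r t * lam) / (c t * ep t (c t))"
    using assms(7) by (simp add: Omega_II_def)
  have "\<theta> t * up t 1 > p t * c t + (d t + r t) * lam"
    using assms(7) pd_facts(10) by (simp add: Omega_II_def X_fun_def pos_divide_less_eq)
  then have "x t = 1"
    using kkt_period_full_usage[OF pd_facts(6-9) _ kkt(3) Du pd_facts(5) _ stat_x stat_z kkt(4,9)]
      kkt(1,2) by linarith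
  have "ep t ((1 - z t) * c t) = (p t * c t + r t * lam) / (\<beta> t * c t)"
    by (rule kkt_period_marginal_cost[OF pd_facts(11)
          strict_mono_on_bij_betw_nonneg_zero[OF pd_facts(11,12)] pd_facts(1-4) kkt(6)
          kkt(1) _ \<beta>_ge _ kkt(4,5,7)])
      (use kkt(2,8) stat_z \<open>x t = 1\<close> in simp_all)
  moreover have "inj_on (ep t) {0..}"
    using pd_facts(11) strict_mono_on_imp_inj_on by blast
  ultimately have "the_inv_into {0..} (ep t) ((p t * c t + r t * lam) / (\<beta> t * c t)) = (1 - z t) * c t"
    using the_inv_into_f_f[of "ep t" "{0..}" "(1 - z t) * c t"] kkt(2) \<open>x t = 1\<close> pd_facts(1) by simp
  then show ?thesis
    using \<open>x t = 1\<close> pd_facts(1) by (simp add: z_II_def a_fun_def)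
qed

end
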